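(* There is a constant $C$ such that for every sufficiently large $n$ there exists a $1$-planar graph of girth $5$ on $n$ vertices with at least $\left(2+\frac{1}{6}\right)n-C$ edges.
   Context: All graphs are finite and simple. A graph is $k$-planar if it admits a drawing in the plane in which every edge is crossed at most $k$ times. The girth of a graph is the length of its shortest cycle. (The paper states the edge count as $(2+\frac16)n-O(1)$.) *)

theory Defs
  imports "HOL-Analysis.Analysis" "HOL-Library.Extended_Nat"
begin

definition simple_graph :: "'a set \<Rightarrow> 'a set set \<Rightarrow> bool" where
  "simple_graph V E \<longleftrightarrow> finite V \<and>
     (\<forall>e\<in>E. \<exists>u v. e = {u, v} \<and> u \<in> V \<and> v \<in> V \<and> u \<noteq> v)"

definition has_cycle_of_length :: "'a set \<Rightarrow> 'a set set \<Rightarrow> nat \<Rightarrow> bool" where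
  "has_cycle_of_length V E k \<longleftrightarrow> k \<ge> 3 \<and>
     (\<exists>xs. length xs = k \<and> distinct xs \<and> set xs \<subseteq> V \<and>
          (\<forall>i<k. {xs ! i, xs ! ((i + 1) mod k)} \<in> E))"

text \<open>Girth: length of a shortest cycle (infinity if acyclic).\<close>
definition girth :: "'a set \<Rightarrow> 'a set set \<Rightarrow> enat" where
  "girth V E = (INF k\<in>{k. has_cycle_of_length V E k}. enat k)"

definition k_planar :: "nat \<Rightarrow> 'a set \<Rightarrow> 'a set set \<Rightarrow> bool" where
  "k_planar k V E \<longleftrightarrow>
    (\<exists>(pos :: 'a \<Rightarrow> real \<times> real) (\<gamma> :: 'a set \<Rightarrow> real \<Rightarrow> real \<times> real).
       inj_on pos V \<and>
       (\<forall>e\<in>E. arc (\<gamma> e) \<and> {pathstart (\<gamma> e), pathfinish (\<gamma> e)} = pos ` e \<and>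
                path_image (\<gamma> e) \<inter> pos ` V = pos ` e) \<and>
       (\<forall>e\<in>E. finite {(f, p). f \<in> E \<and> f \<noteq> e \<and>
                   p \<in> path_image (\<gamma> e) \<inter> path_image (\<gamma> f) \<and> p \<notin> pos ` V} \<and>
               card {(f, p). f \<in> E \<and> f \<noteq> e \<and>
                   p \<in> path_image (\<gamma> e) \<inter> path_image (\<gamma> f) \<and> p \<notin> pos ` V} \<le> k))"

end

theory Submission
  imports Defs
begin

text \<open>Vertex \<open>t = 6q + r\<close> is drawn at \<open>c\<^sup>q b\<^sub>r\<close> in the complex plane, where \<open>c = 3 - 3i\<close> and
  \<open>b\<^sub>0, \<dots>, b\<^sub>5\<close> are six fixed Gaussian integers, and is joined by a straight segment to
  \<open>t + d\<close> for each \<open>d\<close> in a set of jumps depending only on \<open>r\<close>: 13 edges per block of six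
  consecutive vertices. Multiplication by \<open>c\<close> is a similarity, so shifting everything by one block
  maps the drawing into itself. Since \<open>|c|\<^sup>2 = 18\<close>, the edges of block \<open>q\<close> lie in the annulus
  \<open>18\<^sup>q/5 \<le> |z|\<^sup>2 \<le> 648 \<cdot> 18\<^sup>q\<close>, so objects three or more blocks apart never meet, and every
  incidence or crossing is the image of one between block 0 and blocks 0 to 2. These finitely many
  cases are decided by computation: no segment passes through a further vertex, and each edge is
  crossed at most once, by its partner in one of four crossing pairs per block. Likewise the two
  neighbours above the least vertex of a triangle or 4-cycle lead to a finite check in block 0,
  while 0, 1, 12, 11, 10 is a 5-cycle.\<close>

section \<open>Segments in the plane\<close>

lemma all_eq_imp_subset_singleton: "(\<And>x y. x \<in> A \<Longrightarrow> y \<in> A \<Longrightarrow> x = y) \<Longrightarrow> \<exists>z. A \<subseteq> {z}"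
  by blast

lemma inj_image_subset_singleton_iff:
  assumes "inj f"
  shows "(\<exists>z. f ` A \<subseteq> {z}) \<longleftrightarrow> (\<exists>z. A \<subseteq> {z})"
proof
  assume "\<exists>z. f ` A \<subseteq> {z}"
  then have "x = y" if "x \<in> A" "y \<in> A" for x y
    using that injD[OF assms] by blast
  then show "\<exists>z. A \<subseteq> {z}"
    by (rule all_eq_imp_subset_singleton)
qed blast

definition cross2 :: "real \<times> real \<Rightarrow> real \<times> real \<Rightarrow> real" where
  "cross2 u v = fst u * snd v - snd u * fst v"

lemma cross2_self [simp]: "cross2 u u = 0"
  by (simp add: cross2_def)

lemma cross2_zero_right [simp]: "cross2 u 0 = 0"
  by (simp add: cross2_def)

lemma cross2_scaleR_left [simp]: "cross2 (c *\<^sub>R u) v = c * cross2 u v"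
  by (simp add: cross2_def algebra_simps)

lemma cross2_scaleR_right [simp]: "cross2 u (c *\<^sub>R v) = c * cross2 u v"
  by (simp add: cross2_def algebra_simps)

lemma cross2_add_right: "cross2 u (v + w) = cross2 u v + cross2 u w"
  by (simp add: cross2_def algebra_simps)

lemma cross2_diff_right: "cross2 u (v - w) = cross2 u v - cross2 u w"
  by (simp add: cross2_def algebra_simps)

lemma cross2_diff_left: "cross2 (u - v) w = cross2 u w - cross2 v w"
  by (simp add: cross2_def algebra_simps)

lemma power2_norm_prod: "(norm z)\<^sup>2 = (fst z)\<^sup>2 + (snd z)\<^sup>2" for z :: "real \<times> real"
  by (cases z) (simp add: norm_Pair)

lemma Lagrange_identity_cross2: "(norm u * norm v)\<^sup>2 = (cross2 u v)\<^sup>2 + (inner u v)\<^sup>2"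
  unfolding power_mult_distrib power2_norm_prod
  by (simp add: cross2_def inner_prod_def power2_eq_square algebra_simps)

lemma closed_segment_diff_scaleR:
  assumes "x \<in> closed_segment a b"
  obtains u where "0 \<le> u" "u \<le> 1" "x - a = u *\<^sub>R (b - a)"
proof -
  from assms obtain u where "0 \<le> u" "u \<le> 1" "x = (1 - u) *\<^sub>R a + u *\<^sub>R b"
    by (auto simp: in_segment)
  then show ?thesis
    using that[of u] by (simp add: algebra_simps)
qed

lemma cross2_closed_segment:
  assumes "x \<in> closed_segment p q"
  shows "cross2 w (x - a) \<in> closed_segment (cross2 w (p - a)) (cross2 w (q - a))"
proof -
  obtain u where u: "0 \<le> u" "u \<le> 1" "x - p = u *\<^sub>R (q - p)"
    using assms by (rule closed_segment_diff_scaleR)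
  have "x - a = (p - a) + u *\<^sub>R ((q - a) - (p - a))"
    using u(3) by (simp add: algebra_simps)
  then have "cross2 w (x - a) = cross2 w (p - a) + u * (cross2 w (q - a) - cross2 w (p - a))"
    by (simp add: cross2_add_right cross2_diff_right)
  then show ?thesis
    using u(1,2) unfolding in_segment by (intro conjI exI[of _ u]) (simp_all add: algebra_simps)
qed

lemma cross2_on_closed_segment:
  assumes "x \<in> closed_segment a b"
  shows "cross2 (b - a) (x - a) = 0"
  using cross2_closed_segment[OF assms, of "b - a" a] by simp

definition same_side :: "real \<times> real \<Rightarrow> real \<times> real \<Rightarrow> real \<times> real \<Rightarrow> real \<times> real \<Rightarrow> bool" where
  "same_side a b p q \<longleftrightarrow> 0 < cross2 (b - a) (p - a) * cross2 (b - a) (q - a)"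

lemma same_side_closed_segments_disjoint:
  assumes "same_side a b p q"
  shows "closed_segment a b \<inter> closed_segment p q = {}"
proof (rule ccontr)
  assume "closed_segment a b \<inter> closed_segment p q \<noteq> {}"
  then obtain x where x: "x \<in> closed_segment a b" "x \<in> closed_segment p q"
    by blast
  have "0 \<in> closed_segment (cross2 (b - a) (p - a)) (cross2 (b - a) (q - a))"
    using cross2_closed_segment[OF x(2), of "b - a" a] cross2_on_closed_segment[OF x(1)] by simp
  with assms show False
    unfolding same_side_def closed_segment_eq_real_ivl
    by (auto split: if_splits simp: zero_less_mult_iff)
qed

lemma closed_segments_Int_subsingleton:
  assumes "cross2 (b - a) (q - p) \<noteq> 0"
  shows "\<exists>z. closed_segment a b \<inter> closed_segment p q \<subseteq> {z}"
proof -
  have "x = y" if x: "x \<in> closed_segment a b \<inter> closed_segment p q"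
    and y: "y \<in> closed_segment a b \<inter> closed_segment p q" for x y
  proof -
    have diff: "x - y = (x - c) - (y - c)" for c
      by simp
    obtain s s' where "x - a = s *\<^sub>R (b - a)" "y - a = s' *\<^sub>R (b - a)"
      using x y closed_segment_diff_scaleR by (metis IntD1)
    then have xy: "x - y = (s - s') *\<^sub>R (b - a)"
      using diff[of a] by (simp add: scaleR_diff_left)
    obtain u u' where "x - p = u *\<^sub>R (q - p)" "y - p = u' *\<^sub>R (q - p)"
      using x y closed_segment_diff_scaleR by (metis IntD2)
    then have "x - y = (u - u') *\<^sub>R (q - p)"
      using diff[of p] by (simp add: scaleR_diff_left)
    then have "(s - s') * cross2 (b - a) (q - p) = 0"
      using xy by (metis cross2_scaleR_left cross2_self mult_zero_right)
    then show ?thesis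
      using assms xy by simp
  qed
  then show ?thesis
    by (rule all_eq_imp_subset_singleton)
qed

lemma closed_segment_cross2_inner:
  assumes "p \<in> closed_segment a b"
  shows "cross2 (b - a) (p - a) = 0 \<and> 0 \<le> inner (p - a) (b - a) \<and> 0 \<le> inner (p - b) (a - b)"
proof -
  obtain u where u: "0 \<le> u" "u \<le> 1" "p - a = u *\<^sub>R (b - a)"
    using assms by (rule closed_segment_diff_scaleR)
  have "p - b = (1 - u) *\<^sub>R (a - b)"
    using u(3) by (simp add: algebra_simps)
  then show ?thesis
    using u by (simp add: cross2_on_closed_segment[OF assms])
qed

(* |cross2 a b| / |b - a| is the distance from the origin to the line through a and b. *)
lemma cross2_le_norm_closed_segment:
  assumes "x \<in> closed_segment a b"
  shows "(cross2 a b)\<^sup>2 \<le> (norm x * norm (b - a))\<^sup>2"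
proof -
  have "cross2 (x - a) (b - a) = 0"
    using cross2_on_closed_segment[OF assms] by (simp add: cross2_def algebra_simps)
  then have "cross2 x (b - a) = cross2 a b"
    by (simp add: cross2_diff_left cross2_def algebra_simps)
  then show ?thesis
    using Lagrange_identity_cross2[of x "b - a"] by simp
qed

section \<open>The spiral drawing\<close>

definition cmul :: "real \<times> real \<Rightarrow> real \<times> real \<Rightarrow> real \<times> real" where
  "cmul z w = (fst z * fst w - snd z * snd w, fst z * snd w + snd z * fst w)"

lemma linear_cmul: "linear (cmul z)"
  by (rule linearI) (auto simp: cmul_def algebra_simps)

lemma power2_norm_cmul: "(norm (cmul z w))\<^sup>2 = (norm z)\<^sup>2 * (norm w)\<^sup>2"
  unfolding power2_norm_prod by (simp add: cmul_def power2_eq_square algebra_simps)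

lemma inj_cmul:
  assumes "z \<noteq> 0"
  shows "inj (cmul z)"
proof (rule injI)
  fix w w'
  assume "cmul z w = cmul z w'"
  then have "cmul z (w - w') = 0"
    by (simp add: linear_diff[OF linear_cmul])
  then have "(norm z)\<^sup>2 * (norm (w - w'))\<^sup>2 = 0"
    by (metis power2_norm_cmul norm_zero zero_power2)
  then show "w = w'"
    using assms by simp
qed

definition block_map :: "real \<times> real \<Rightarrow> real \<times> real" where
  "block_map = cmul (3, -3)"

lemma linear_block_map_pow: "linear (block_map ^^ q)"
  by (induction q) (simp_all only: funpow.simps linear_id linear_compose linear_cmul block_map_def)

lemma inj_block_map_pow: "inj (block_map ^^ q)"
  unfolding block_map_def by (intro inj_fn inj_cmul) (simp add: zero_prod_def)

lemma power2_norm_block_map: "(norm (block_map x))\<^sup>2 = 18 * (norm x)\<^sup>2"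
proof -
  have "(norm (3::real, -3::real))\<^sup>2 = 18"
    by (simp add: power2_norm_prod)
  then show ?thesis
    by (simp add: block_map_def power2_norm_cmul)
qed

lemma power2_norm_block_map_pow: "(norm ((block_map ^^ q) x))\<^sup>2 = 18 ^ q * (norm x)\<^sup>2"
  by (induction q) (simp_all add: power2_norm_block_map)

definition base_pos :: "nat \<Rightarrow> real \<times> real" where
  "base_pos r = [(1, 0), (1, -1), (-1, 0), (-2, 1), (0, 2), (3, 3)] ! r"

definition vertex_pos :: "nat \<Rightarrow> real \<times> real" where
  "vertex_pos t = (block_map ^^ (t div 6)) (base_pos (t mod 6))"

definition jumps :: "nat \<Rightarrow> nat set" where
  "jumps t = [{1, 5, 10}, {1, 11}, {1, 5}, {1, 10}, {1, 5}, {1, 9}] ! (t mod 6)"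

lemma lessThan_6: "{..<6::nat} = {0, 1, 2, 3, 4, 5}"
  by (simp add: lessThan_nat_numeral lessThan_Suc insert_commute)

lemma mod_6_cases: "t mod 6 \<in> {0, 1, 2, 3, 4, 5}" for t :: nat
proof -
  have "t mod 6 \<in> {..<6}"
    by simp
  then show ?thesis
    unfolding lessThan_6 .
qed

lemma jumps_shift [simp]: "jumps (6 * q + t) = jumps t"
  by (simp add: jumps_def)

lemma jumps_mod: "jumps (t mod 6) = jumps t"
  by (simp add: jumps_def)

lemma jumps_subset: "jumps t \<subseteq> {1, 5, 9, 10, 11}"
  using mod_6_cases[of t] by (auto simp: jumps_def)

lemma jumps_pos: "d \<in> jumps t \<Longrightarrow> 0 < d"
  using jumps_subset by fastforce

lemma one_in_jumps: "1 \<in> jumps t"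
  using mod_6_cases[of t] by (auto simp: jumps_def)

lemma mem_Sigma_jumps: "e \<in> (SIGMA t:A. jumps t) \<longleftrightarrow> fst e \<in> A \<and> snd e \<in> jumps (fst e)"
  by (cases e) simp

definition ends :: "nat \<times> nat \<Rightarrow> nat set" where
  "ends e = {fst e, fst e + snd e}"

definition edge_seg :: "nat \<times> nat \<Rightarrow> (real \<times> real) set" where
  "edge_seg e = closed_segment (vertex_pos (fst e)) (vertex_pos (fst e + snd e))"

(* The only crossings of the drawing, as base_edges_meet confirms. *)
definition crosses :: "nat \<times> nat \<Rightarrow> nat \<times> nat \<Rightarrow> bool" where
  "crosses e f \<longleftrightarrow> snd f = 1 \<and>
     (fst e mod 6, snd e, fst f) \<in> {(0, 10, fst e + 5), (1, 11, fst e + 5), (3, 10, fst e + 4), (5, 9, fst e + 4)}"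

definition crossing_pair :: "nat \<times> nat \<Rightarrow> nat \<times> nat \<Rightarrow> bool" where
  "crossing_pair e f \<longleftrightarrow> crosses e f \<or> crosses f e"

definition meet_properly :: "nat \<times> nat \<Rightarrow> nat \<times> nat \<Rightarrow> bool" where
  "meet_properly e f \<longleftrightarrow>
     edge_seg e \<inter> edge_seg f \<subseteq> vertex_pos ` (ends e \<union> ends f) \<or>
     crossing_pair e f \<and> (\<exists>z. edge_seg e \<inter> edge_seg f \<subseteq> {z})"

section \<open>Finite checks on the first three blocks\<close>

lemma funpow_numeral: "f ^^ numeral k = f \<circ> f ^^ pred_numeral k"
  by (simp add: numeral_eq_Suc)

lemma vertex_pos_table:
  "vertex_pos 0 = (1, 0) \<and>
   vertex_pos 1 = (1, -1) \<and>
   vertex_pos 2 = (-1, 0) \<and>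
   vertex_pos 3 = (-2, 1) \<and>
   vertex_pos 4 = (0, 2) \<and>
   vertex_pos 5 = (3, 3) \<and>
   vertex_pos 6 = (3, -3) \<and>
   vertex_pos 7 = (0, -6) \<and>
   vertex_pos 8 = (-3, 3) \<and>
   vertex_pos 9 = (-3, 9) \<and>
   vertex_pos 10 = (6, 6) \<and>
   vertex_pos 11 = (18, 0) \<and>
   vertex_pos 12 = (0, -18) \<and>
   vertex_pos 13 = (-18, -18) \<and>
   vertex_pos 14 = (0, 18) \<and>
   vertex_pos 15 = (18, 36) \<and>
   vertex_pos 16 = (36, 0) \<and>
   vertex_pos 17 = (54, -54) \<and>
   vertex_pos 18 = (-54, -54) \<and>
   vertex_pos 19 = (-108, 0) \<and>
   vertex_pos 20 = (54, 54) \<and>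
   vertex_pos 21 = (162, 54) \<and>
   vertex_pos 22 = (108, -108) \<and>
   vertex_pos 23 = (0, -324) \<and>
   vertex_pos 24 = (-324, 0) \<and>
   vertex_pos 25 = (-324, 324) \<and>
   vertex_pos 26 = (324, 0) \<and>
   vertex_pos 27 = (648, -324) \<and>
   vertex_pos 28 = (0, -648) \<and>
   vertex_pos 29 = (-972, -972)"
  by (simp add: vertex_pos_def base_pos_def block_map_def cmul_def funpow_numeral)

lemma lessThan_18: "{..<18::nat} = {0, 1, 2, 3, 4, 5, 6, 7, 8, 9, 10, 11, 12, 13, 14, 15, 16, 17}"
  by (simp add: lessThan_nat_numeral lessThan_Suc insert_commute)

(* Deleting One_nat_def keeps 1 a numeral, so that sums like 1 + 5 evaluate to numerals
   matching vertex_pos_table instead of becoming Suc terms. *)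
lemma base_edge_bounds:
  "\<forall>e\<in>(SIGMA t:{..<6}. jumps t).
     let a = vertex_pos (fst e); b = vertex_pos (fst e + snd e) in
     (norm a)\<^sup>2 \<le> 648 \<and> (norm b)\<^sup>2 \<le> 648 \<and> a \<noteq> b \<and> (norm (b - a))\<^sup>2 \<le> 5 * (cross2 a b)\<^sup>2"
  unfolding lessThan_6 Sigma_def
  by (simp add: jumps_def vertex_pos_table power2_norm_prod Let_def cross2_def del: One_nat_def)

lemma base_vertex_bounds: "\<forall>r\<in>{..<6}. 1 \<le> (norm (base_pos r))\<^sup>2 \<and> (norm (base_pos r))\<^sup>2 \<le> 18"
  unfolding lessThan_6 by (simp add: base_pos_def power2_norm_prod)

lemma base_vertices_off_edges:
  "\<forall>e\<in>(SIGMA t:{..<18}. jumps t). \<forall>v\<in>{..<18}. v \<notin> ends e \<longrightarrow>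
     (let a = vertex_pos (fst e); b = vertex_pos (fst e + snd e); p = vertex_pos v in
      cross2 (b - a) (p - a) \<noteq> 0 \<or> inner (p - a) (b - a) < 0 \<or> inner (p - b) (a - b) < 0)"
  unfolding lessThan_18 Sigma_def
  by (simp add: jumps_def ends_def vertex_pos_table Let_def cross2_def del: One_nat_def)

lemma base_edges_meet:
  "\<forall>e\<in>(SIGMA t:{..<6}. jumps t). \<forall>f\<in>(SIGMA t:{..<18}. jumps t). e \<noteq> f \<longrightarrow>
     (let a = vertex_pos (fst e); b = vertex_pos (fst e + snd e);
          p = vertex_pos (fst f); q = vertex_pos (fst f + snd f) in
      same_side a b p q \<or> same_side p q a b \<or>
      cross2 (b - a) (q - p) \<noteq> 0 \<and> (ends e \<inter> ends f \<noteq> {} \<or> crossing_pair e f))"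
  unfolding lessThan_6 lessThan_18 Sigma_def
  by (simp add: jumps_def ends_def vertex_pos_table Let_def same_side_def cross2_def
      crossing_pair_def crosses_def del: One_nat_def)

section \<open>Self-similarity and growth\<close>

definition shift :: "nat \<Rightarrow> nat \<times> nat \<Rightarrow> nat \<times> nat" where
  "shift q e = (6 * q + fst e, snd e)"

lemma block_offset:
  fixes t :: nat
  assumes "q \<le> t div 6"
  shows "t = 6 * q + (t - 6 * q)" "(t - 6 * q) div 6 = t div 6 - q"
  using assms by linarith+

lemma vertex_pos_shift: "vertex_pos (6 * q + t) = (block_map ^^ q) (vertex_pos t)"
proof -
  have "(6 * q + t) div 6 = q + t div 6" "(6 * q + t) mod 6 = t mod 6"
    by simp_all
  then show ?thesis
    by (simp add: vertex_pos_def funpow_add)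
qed

lemma edge_seg_shift: "edge_seg (shift q e) = (block_map ^^ q) ` edge_seg e"
  by (simp add: edge_seg_def shift_def vertex_pos_shift add.assoc
      closed_segment_linear_image[OF linear_block_map_pow])

lemma vertex_pos_ends_shift: "vertex_pos ` ends (shift q e) = (block_map ^^ q) ` vertex_pos ` ends e"
  by (simp add: ends_def shift_def vertex_pos_shift add.assoc)

lemma crossing_pair_shift: "crossing_pair (shift q e) (shift q f) \<longleftrightarrow> crossing_pair e f"
  by (simp add: crossing_pair_def crosses_def shift_def)

lemma meet_properly_shift: "meet_properly (shift q e) (shift q f) \<longleftrightarrow> meet_properly e f"
proof -
  let ?M = "block_map ^^ q"
  have Int: "edge_seg (shift q e) \<inter> edge_seg (shift q f) = ?M ` (edge_seg e \<inter> edge_seg f)"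
    by (simp add: edge_seg_shift image_Int[OF inj_block_map_pow])
  have ends: "vertex_pos ` (ends (shift q e) \<union> ends (shift q f)) = ?M ` vertex_pos ` (ends e \<union> ends f)"
    by (simp add: image_Un vertex_pos_ends_shift)
  have sub: "?M ` A \<subseteq> ?M ` B \<longleftrightarrow> A \<subseteq> B" for A B
    by (rule inj_image_subset_iff[OF inj_block_map_pow])
  have "(\<exists>z. ?M ` A \<subseteq> {z}) \<longleftrightarrow> (\<exists>z. A \<subseteq> {z})" for A
    by (rule inj_image_subset_singleton_iff[OF inj_block_map_pow])
  then show ?thesis
    unfolding meet_properly_def Int ends crossing_pair_shift sub by simp
qed

lemma norm_edge_seg_bounds_block_0:
  assumes "e \<in> (SIGMA t:{..<6}. jumps t)" "x \<in> edge_seg e"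
  shows "1 \<le> 5 * (norm x)\<^sup>2 \<and> (norm x)\<^sup>2 \<le> 648"
proof -
  define a b where "a = vertex_pos (fst e)" and "b = vertex_pos (fst e + snd e)"
  have bounds: "(norm a)\<^sup>2 \<le> 648" "(norm b)\<^sup>2 \<le> 648" "a \<noteq> b" "(norm (b - a))\<^sup>2 \<le> 5 * (cross2 a b)\<^sup>2"
    using bspec[OF base_edge_bounds assms(1)] unfolding a_def b_def Let_def by blast+
  have x: "x \<in> closed_segment a b"
    using assms(2) by (simp add: edge_seg_def a_def b_def)
  have "closed_segment a b \<subseteq> cball 0 (sqrt 648)"
    using bounds(1,2) by (intro closed_segment_subset convex_cball) (simp_all add: real_le_rsqrt)
  then have "norm x \<le> sqrt 648"
    using x by auto
  then have upper: "(norm x)\<^sup>2 \<le> 648"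
    by (metis norm_ge_zero power_mono real_sqrt_pow2 zero_le_numeral)
  have "(norm (b - a))\<^sup>2 * 1 \<le> 5 * (cross2 a b)\<^sup>2"
    using bounds(4) by simp
  also have "\<dots> \<le> 5 * (norm x * norm (b - a))\<^sup>2"
    using cross2_le_norm_closed_segment[OF x] by simp
  also have "\<dots> = (norm (b - a))\<^sup>2 * (5 * (norm x)\<^sup>2)"
    by (simp add: power_mult_distrib)
  finally have "(norm (b - a))\<^sup>2 * 1 \<le> (norm (b - a))\<^sup>2 * (5 * (norm x)\<^sup>2)" .
  moreover have "0 < (norm (b - a))\<^sup>2"
    using bounds(3) by simp
  ultimately show ?thesis
    using upper by (simp only: mult_le_cancel_left_pos)
qed

lemma norm_edge_seg_bounds:
  assumes "d \<in> jumps t" "x \<in> edge_seg (t, d)"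
  shows "18 ^ (t div 6) \<le> 5 * (norm x)\<^sup>2 \<and> (norm x)\<^sup>2 \<le> 648 * 18 ^ (t div 6)"
proof -
  have "edge_seg (t, d) = (block_map ^^ (t div 6)) ` edge_seg (t mod 6, d)"
    using edge_seg_shift[of "t div 6" "(t mod 6, d)"] by (simp add: shift_def)
  then obtain y where y: "y \<in> edge_seg (t mod 6, d)" "x = (block_map ^^ (t div 6)) y"
    using assms(2) by blast
  have "(t mod 6, d) \<in> (SIGMA t:{..<6}. jumps t)"
    using assms(1) by (simp add: jumps_mod)
  then have "1 \<le> 5 * (norm y)\<^sup>2 \<and> (norm y)\<^sup>2 \<le> 648"
    using norm_edge_seg_bounds_block_0 y(1) by blast
  moreover have "(norm x)\<^sup>2 = 18 ^ (t div 6) * (norm y)\<^sup>2"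
    using y(2) by (simp add: power2_norm_block_map_pow)
  ultimately show ?thesis
    by (simp add: mult.left_commute)
qed

lemma norm_vertex_pos_bounds:
  "18 ^ (t div 6) \<le> (norm (vertex_pos t))\<^sup>2 \<and> (norm (vertex_pos t))\<^sup>2 \<le> 18 * 18 ^ (t div 6)"
proof -
  have "1 \<le> (norm (base_pos (t mod 6)))\<^sup>2 \<and> (norm (base_pos (t mod 6)))\<^sup>2 \<le> 18"
    using base_vertex_bounds by simp
  then show ?thesis
    by (simp add: vertex_pos_def power2_norm_block_map_pow mult.commute)
qed

lemma edge_segs_far_disjoint:
  assumes "d \<in> jumps t" "d' \<in> jumps t'" "t div 6 + 3 \<le> t' div 6"
  shows "edge_seg (t, d) \<inter> edge_seg (t', d') = {}"
proof (rule equals0I)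
  fix x
  assume "x \<in> edge_seg (t, d) \<inter> edge_seg (t', d')"
  then have "(norm x)\<^sup>2 \<le> 648 * 18 ^ (t div 6)" "18 ^ (t' div 6) \<le> 5 * (norm x)\<^sup>2"
    using norm_edge_seg_bounds assms(1,2) by blast+
  moreover have "5832 * (18::real) ^ (t div 6) \<le> 18 ^ (t' div 6)"
    using power_increasing[of "t div 6 + 3" "t' div 6" "18::real"] assms(3) by (simp add: power_add)
  moreover have "(0::real) < 18 ^ (t div 6)"
    by simp
  ultimately show False
    by linarith
qed

lemma vertex_pos_far_from_edge_seg:
  assumes "d \<in> jumps t" "t div 6 + 3 \<le> v div 6 \<or> v div 6 + 3 \<le> t div 6"
  shows "vertex_pos v \<notin> edge_seg (t, d)"
proof
  assume "vertex_pos v \<in> edge_seg (t, d)"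
  then have "(norm (vertex_pos v))\<^sup>2 \<le> 648 * 18 ^ (t div 6)"
    "18 ^ (t div 6) \<le> 5 * (norm (vertex_pos v))\<^sup>2"
    using norm_edge_seg_bounds assms(1) by blast+
  moreover have "18 ^ (v div 6) \<le> (norm (vertex_pos v))\<^sup>2"
    "(norm (vertex_pos v))\<^sup>2 \<le> 18 * 18 ^ (v div 6)"
    using norm_vertex_pos_bounds by blast+
  moreover have "5832 * (18::real) ^ (t div 6) \<le> 18 ^ (v div 6) \<or>
      5832 * (18::real) ^ (v div 6) \<le> 18 ^ (t div 6)"
    using assms(2) power_increasing[of "t div 6 + 3" "v div 6" "18::real"]
      power_increasing[of "v div 6 + 3" "t div 6" "18::real"] by (auto simp: power_add)
  moreover have "(0::real) < 18 ^ (t div 6)" "(0::real) < 18 ^ (v div 6)"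
    by simp_all
  ultimately show False
    by linarith
qed

section \<open>1-planarity\<close>

lemma vertex_on_edge_seg_block_0:
  assumes "e \<in> (SIGMA t:{..<18}. jumps t)" "v < 18" "vertex_pos v \<in> edge_seg e"
  shows "v \<in> ends e"
proof (rule ccontr)
  assume "v \<notin> ends e"
  then show False
    using bspec[OF bspec[OF base_vertices_off_edges assms(1)], of v] assms(2)
      closed_segment_cross2_inner[OF assms(3)[unfolded edge_seg_def]]
    by (auto simp: Let_def)
qed

lemma vertex_on_edge_seg:
  assumes "snd e \<in> jumps (fst e)" "vertex_pos v \<in> edge_seg e"
  shows "v \<in> ends e"
proof -
  obtain t d where e: "e = (t, d)"
    by (cases e)
  define q where "q = min (t div 6) (v div 6)"
  define t0 v0 where "t0 = t - 6 * q" and "v0 = v - 6 * q"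
  have t: "t = 6 * q + t0" "t0 div 6 = t div 6 - q" and v: "v = 6 * q + v0" "v0 div 6 = v div 6 - q"
    unfolding t0_def v0_def q_def by (simp_all add: block_offset)
  have "\<not> (t div 6 + 3 \<le> v div 6 \<or> v div 6 + 3 \<le> t div 6)"
    using vertex_pos_far_from_edge_seg assms unfolding e by auto
  then have "t0 < 18" "v0 < 18"
    using t(2) v(2) unfolding q_def by linarith+
  have "(t, d) = shift q (t0, d)"
    using t(1) by (simp add: shift_def)
  then have "(block_map ^^ q) (vertex_pos v0) \<in> (block_map ^^ q) ` edge_seg (t0, d)"
    using assms(2) by (simp add: e edge_seg_shift v(1) vertex_pos_shift)
  then have "vertex_pos v0 \<in> edge_seg (t0, d)"
    by (simp add: inj_image_mem_iff[OF inj_block_map_pow])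
  then have "v0 \<in> ends (t0, d)"
    using vertex_on_edge_seg_block_0 \<open>t0 < 18\<close> \<open>v0 < 18\<close> assms(1) t(1) e by simp
  then show ?thesis
    using t(1) v(1) e by (auto simp: ends_def)
qed

lemma inj_vertex_pos: "inj vertex_pos"
proof (rule injI)
  fix v w
  assume eq: "vertex_pos v = vertex_pos w"
  have "vertex_pos v \<in> edge_seg (w, 1)" "vertex_pos w \<in> edge_seg (v, 1)"
    using eq by (simp_all add: edge_seg_def)
  then have "v \<in> ends (w, 1)" "w \<in> ends (v, 1)"
    using vertex_on_edge_seg one_in_jumps by simp_all
  then show "v = w"
    by (auto simp: ends_def)
qed

lemma crosses_unit_edge:
  assumes "crosses (t, d) (s, c)"
  shows "c = 1 \<and> (s mod 6, t, d) \<in> {(5, s - 5, 10), (0, s - 5, 11), (1, s - 4, 10), (3, s - 4, 9)}"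
  using assms by (auto simp: crosses_def mod_add_left_eq[symmetric])

lemma crossing_pair_unique:
  assumes "crossing_pair e f" "crossing_pair e g"
  shows "f = g"
proof -
  have "f = g" if "crosses e f" "crosses e g" for f g
    using that by (auto simp: crosses_def prod_eq_iff)
  moreover have "f = g" if "crosses f e" "crosses g e" for f g
    using that by (cases e, cases f, cases g) (auto dest!: crosses_unit_edge)
  moreover have "\<not> (crosses e f \<and> crosses g e)" for f g
    by (auto simp: crosses_def)
  ultimately show ?thesis
    using assms unfolding crossing_pair_def by metis
qed

lemma meet_properly_sym: "meet_properly e f \<longleftrightarrow> meet_properly f e"
  unfolding meet_properly_def crossing_pair_def by (auto simp: Int_commute Un_commute)

lemma meet_properly_block_0:
  assumes "e \<in> (SIGMA t:{..<6}. jumps t)" "f \<in> (SIGMA t:{..<18}. jumps t)" "e \<noteq> f"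
  shows "meet_properly e f"
proof -
  define a b p q where "a = vertex_pos (fst e)" and "b = vertex_pos (fst e + snd e)"
    and "p = vertex_pos (fst f)" and "q = vertex_pos (fst f + snd f)"
  have segs: "edge_seg e = closed_segment a b" "edge_seg f = closed_segment p q"
    by (simp_all add: edge_seg_def a_def b_def p_def q_def)
  have "same_side a b p q \<or> same_side p q a b \<or>
      cross2 (b - a) (q - p) \<noteq> 0 \<and> (ends e \<inter> ends f \<noteq> {} \<or> crossing_pair e f)"
    using bspec[OF bspec[OF base_edges_meet assms(1)] assms(2)] assms(3)
    unfolding a_def b_def p_def q_def Let_def by blast
  then consider "edge_seg e \<inter> edge_seg f = {}"
    | "\<exists>z. edge_seg e \<inter> edge_seg f \<subseteq> {z}" "ends e \<inter> ends f \<noteq> {}"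
    | "\<exists>z. edge_seg e \<inter> edge_seg f \<subseteq> {z}" "crossing_pair e f"
    unfolding segs using same_side_closed_segments_disjoint closed_segments_Int_subsingleton
    by (metis Int_commute)
  then show ?thesis
  proof cases
    case 2
    then obtain z c where z: "edge_seg e \<inter> edge_seg f \<subseteq> {z}" and c: "c \<in> ends e \<inter> ends f"
      by blast
    have "vertex_pos c \<in> edge_seg e \<inter> edge_seg f"
      using c by (auto simp: ends_def edge_seg_def)
    then have "edge_seg e \<inter> edge_seg f \<subseteq> vertex_pos ` (ends e \<union> ends f)"
      using z c by blast
    then show ?thesis
      by (simp add: meet_properly_def)
  qed (auto simp: meet_properly_def)
qed

lemma edges_meet_properly:
  assumes "snd e \<in> jumps (fst e)" "snd f \<in> jumps (fst f)" "e \<noteq> f"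
  shows "meet_properly e f"
proof -
  have "meet_properly e f"
    if "snd e \<in> jumps (fst e)" "snd f \<in> jumps (fst f)" "e \<noteq> f" "fst e div 6 \<le> fst f div 6" for e f
  proof (cases "fst e div 6 + 3 \<le> fst f div 6")
    case True
    then have "edge_seg e \<inter> edge_seg f = {}"
      using edge_segs_far_disjoint[of "snd e" "fst e" "snd f" "fst f"] that(1,2) by simp
    then show ?thesis
      by (simp add: meet_properly_def)
  next
    case False
    define q where "q = fst e div 6"
    define e0 f0 where "e0 = (fst e - 6 * q, snd e)" and "f0 = (fst f - 6 * q, snd f)"
    have e: "e = shift q e0" "fst e0 < 6"
      unfolding e0_def q_def shift_def by (simp_all add: prod_eq_iff)
    have "(fst f - 6 * q) div 6 = fst f div 6 - q" "f = shift q f0"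
      using block_offset[of q "fst f"] that(4) unfolding f0_def q_def shift_def
      by (simp_all add: prod_eq_iff)
    then have f: "f = shift q f0" "fst f0 < 18"
      using False unfolding f0_def q_def by simp_all linarith
    have "e0 \<in> (SIGMA t:{..<6}. jumps t)" "f0 \<in> (SIGMA t:{..<18}. jumps t)" "e0 \<noteq> f0"
      using e f that(1-3) by (auto simp: mem_Sigma_jumps shift_def)
    then show ?thesis
      unfolding e(1) f(1) meet_properly_shift by (rule meet_properly_block_0)
  qed
  then show ?thesis
    using assms meet_properly_sym by (metis nat_le_linear)
qed

definition spiral_edges :: "nat \<Rightarrow> nat set set" where
  "spiral_edges n = ends ` {e. snd e \<in> jumps (fst e) \<and> fst e + snd e < n}"

definition edge_path :: "nat set \<Rightarrow> real \<Rightarrow> real \<times> real" where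
  "edge_path s = linepath (vertex_pos (Min s)) (vertex_pos (Max s))"

lemma spiral_edgesE:
  assumes "s \<in> spiral_edges n"
  obtains e where "s = ends e" "snd e \<in> jumps (fst e)" "fst e + snd e < n"
  using assms unfolding spiral_edges_def by blast

lemma Min_ends: "0 < snd e \<Longrightarrow> Min (ends e) = fst e"
  by (simp add: ends_def min_def)

lemma Max_ends: "0 < snd e \<Longrightarrow> Max (ends e) = fst e + snd e"
  by (simp add: ends_def max_def)

lemma ends_eq_iff: "0 < snd e \<Longrightarrow> 0 < snd f \<Longrightarrow> ends e = ends f \<longleftrightarrow> e = f"
  by (metis Max_ends Min_ends add_left_cancel prod_eq_iff)

lemma edge_path_ends:
  assumes "0 < snd e"
  shows "arc (edge_path (ends e))" "pathstart (edge_path (ends e)) = vertex_pos (fst e)"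
    "pathfinish (edge_path (ends e)) = vertex_pos (fst e + snd e)"
    "path_image (edge_path (ends e)) = edge_seg e"
proof -
  have "vertex_pos (fst e) \<noteq> vertex_pos (fst e + snd e)"
    using assms injD[OF inj_vertex_pos] by fastforce
  then show "arc (edge_path (ends e))" "pathstart (edge_path (ends e)) = vertex_pos (fst e)"
    "pathfinish (edge_path (ends e)) = vertex_pos (fst e + snd e)"
    "path_image (edge_path (ends e)) = edge_seg e"
    using assms by (simp_all add: edge_path_def Min_ends Max_ends edge_seg_def)
qed

lemma edge_path_spiral_edge:
  assumes "s \<in> spiral_edges n"
  shows "arc (edge_path s)" "{pathstart (edge_path s), pathfinish (edge_path s)} = vertex_pos ` s"
    "path_image (edge_path s) \<inter> vertex_pos ` {..<n} = vertex_pos ` s"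
proof -
  obtain e where e: "s = ends e" "snd e \<in> jumps (fst e)" "fst e + snd e < n"
    using assms by (rule spiral_edgesE)
  then have d: "0 < snd e"
    using jumps_pos by auto
  have "edge_seg e \<inter> vertex_pos ` {..<n} \<subseteq> vertex_pos ` ends e"
    using vertex_on_edge_seg[OF e(2)] by blast
  moreover have "vertex_pos ` ends e \<subseteq> edge_seg e \<inter> vertex_pos ` {..<n}"
    using e(3) by (auto simp: ends_def edge_seg_def)
  ultimately have "edge_seg e \<inter> vertex_pos ` {..<n} = vertex_pos ` ends e"
    by (rule antisym)
  then show "arc (edge_path s)" "{pathstart (edge_path s), pathfinish (edge_path s)} = vertex_pos ` s"
    "path_image (edge_path s) \<inter> vertex_pos ` {..<n} = vertex_pos ` s"
    using d by (simp_all add: e(1) edge_path_ends) (simp add: ends_def)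
qed

lemma spiral_crossing_point:
  assumes "snd e \<in> jumps (fst e)" "fst e + snd e < n" "snd f \<in> jumps (fst f)" "fst f + snd f < n"
    and "ends f \<noteq> ends e" "p \<in> edge_seg e \<inter> path_image (edge_path (ends f))"
    and "p \<notin> vertex_pos ` {..<n}"
  shows "crossing_pair e f \<and> p \<in> edge_seg e \<inter> edge_seg f \<and> (\<exists>z. edge_seg e \<inter> edge_seg f \<subseteq> {z})"
proof -
  have "0 < snd f"
    using assms(3) jumps_pos by simp
  then have p: "p \<in> edge_seg e \<inter> edge_seg f"
    using assms(6) by (simp add: edge_path_ends)
  have "ends e \<union> ends f \<subseteq> {..<n}"
    using assms(2,4) by (auto simp: ends_def)
  then have "\<not> edge_seg e \<inter> edge_seg f \<subseteq> vertex_pos ` (ends e \<union> ends f)"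
    using assms(7) p by blast
  moreover have "e \<noteq> f"
    using assms(5) by auto
  ultimately show ?thesis
    using edges_meet_properly[OF assms(1,3)] p unfolding meet_properly_def by blast
qed

lemma crossings_on_edge:
  assumes "snd e \<in> jumps (fst e)" "fst e + snd e < n"
  shows "\<exists>z. {(s, p). s \<in> spiral_edges n \<and> s \<noteq> ends e \<and>
      p \<in> edge_seg e \<inter> path_image (edge_path s) \<and> p \<notin> vertex_pos ` {..<n}} \<subseteq> {z}"
    (is "\<exists>z. ?X \<subseteq> {z}")
proof -
  have crossing: "crossing_pair e f \<and> p \<in> edge_seg e \<inter> edge_seg f \<and> (\<exists>z. edge_seg e \<inter> edge_seg f \<subseteq> {z})"
    if "(ends f, p) \<in> ?X" "snd f \<in> jumps (fst f)" "fst f + snd f < n" for f p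
  proof -
    have "ends f \<noteq> ends e" "p \<in> edge_seg e \<inter> path_image (edge_path (ends f))"
      "p \<notin> vertex_pos ` {..<n}"
      using that(1) by simp_all
    then show ?thesis
      by (rule spiral_crossing_point[OF assms that(2,3)])
  qed
  have "x = y" if x: "x \<in> ?X" and y: "y \<in> ?X" for x y
  proof -
    obtain s p where xsp: "x = (s, p)"
      by (cases x)
    obtain s' p' where ysp: "y = (s', p')"
      by (cases y)
    have "s \<in> spiral_edges n" "s' \<in> spiral_edges n"
      using x y xsp ysp by simp_all
    obtain f where f: "s = ends f" "snd f \<in> jumps (fst f)" "fst f + snd f < n"
      using \<open>s \<in> spiral_edges n\<close> by (rule spiral_edgesE)
    obtain g where g: "s' = ends g" "snd g \<in> jumps (fst g)" "fst g + snd g < n"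
      using \<open>s' \<in> spiral_edges n\<close> by (rule spiral_edgesE)
    have "(ends f, p) \<in> ?X" "(ends g, p') \<in> ?X"
      using x y xsp ysp f(1) g(1) by simp_all
    then have cf: "crossing_pair e f" "p \<in> edge_seg e \<inter> edge_seg f" "\<exists>z. edge_seg e \<inter> edge_seg f \<subseteq> {z}"
      and cg: "crossing_pair e g" "p' \<in> edge_seg e \<inter> edge_seg g"
      using crossing f(2,3) g(2,3) by blast+
    have "f = g"
      using crossing_pair_unique[OF cf(1) cg(1)] .
    then have "p = p'"
      using cf(2,3) cg(2) by blast
    then show "x = y"
      using xsp ysp f(1) g(1) \<open>f = g\<close> by simp
  qed
  then show ?thesis
    by (rule all_eq_imp_subset_singleton)
qed

lemma k_planar_spiral: "k_planar 1 {..<n} (spiral_edges n)"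
proof -
  have inj: "inj_on vertex_pos {..<n}"
    using inj_vertex_pos by (rule inj_on_subset) simp
  have draw: "arc (edge_path s) \<and> {pathstart (edge_path s), pathfinish (edge_path s)} = vertex_pos ` s \<and>
      path_image (edge_path s) \<inter> vertex_pos ` {..<n} = vertex_pos ` s"
    if "s \<in> spiral_edges n" for s
    using edge_path_spiral_edge[OF that] by blast
  have cross: "finite X \<and> card X \<le> 1"
    if "X = {(f, p). f \<in> spiral_edges n \<and> f \<noteq> s \<and>
           p \<in> path_image (edge_path s) \<inter> path_image (edge_path f) \<and> p \<notin> vertex_pos ` {..<n}}"
      and s: "s \<in> spiral_edges n" for s X
  proof -
    obtain e where e: "s = ends e" "snd e \<in> jumps (fst e)" "fst e + snd e < n"
      using s by (rule spiral_edgesE)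
    then have "path_image (edge_path s) = edge_seg e"
      using jumps_pos by (simp add: edge_path_ends)
    then have "\<exists>z. X \<subseteq> {z}"
      using crossings_on_edge[OF e(2,3)] unfolding that(1) e(1) by simp
    then obtain z where "X \<subseteq> {z}"
      by (rule exE)
    then show ?thesis
      using card_mono[of "{z}" X] finite_subset[of X "{z}"] by simp
  qed
  show ?thesis
    unfolding k_planar_def
    by (rule exI[of _ vertex_pos], rule exI[of _ edge_path]) (use inj draw cross in blast)
qed

lemma ends_in_spiral_edges: "d \<in> jumps t \<Longrightarrow> t + d < n \<Longrightarrow> {t, t + d} \<in> spiral_edges n"
  unfolding spiral_edges_def ends_def by (rule image_eqI[of _ _ "(t, d)"]) auto

lemma simple_graph_spiral: "simple_graph {..<n} (spiral_edges n)"
  unfolding simple_graph_def spiral_edges_def ends_def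
  using jumps_pos by fastforce

section \<open>Girth\<close>

definition adjacent :: "nat \<Rightarrow> nat \<Rightarrow> bool" where
  "adjacent a b \<longleftrightarrow> (a < b \<and> b - a \<in> jumps a) \<or> (b < a \<and> a - b \<in> jumps b)"

lemma adjacent_sym: "adjacent a b \<longleftrightarrow> adjacent b a"
  unfolding adjacent_def by auto

lemma adjacent_shift: "adjacent (6 * q + a) (6 * q + b) \<longleftrightarrow> adjacent a b"
  unfolding adjacent_def by auto

lemma adjacent_le: "adjacent a b \<Longrightarrow> b \<le> a + 11"
  unfolding adjacent_def using jumps_subset by fastforce

lemma spiral_edge_adjacent: "{a, b} \<in> spiral_edges n \<Longrightarrow> adjacent a b"
  unfolding spiral_edges_def ends_def adjacent_def
  using jumps_pos by (auto simp: doubleton_eq_iff)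

lemma adjacent_upward: "a < b \<Longrightarrow> adjacent a b \<longleftrightarrow> b - a \<in> jumps a"
  unfolding adjacent_def by auto

lemma lessThan_28: "{..<28::nat} = {0, 1, 2, 3, 4, 5, 6, 7, 8, 9, 10, 11, 12, 13, 14, 15, 16, 17,
    18, 19, 20, 21, 22, 23, 24, 25, 26, 27}"
  by (simp add: lessThan_nat_numeral lessThan_Suc insert_commute)

(* A common neighbour c of a + \<beta> and a + \<gamma> satisfies c \<le> a + 11 + 11 < 28. *)
lemma upper_neighbours_block_0:
  "\<forall>a\<in>{..<6}. \<forall>\<beta>\<in>jumps a. \<forall>\<gamma>\<in>jumps a. \<beta> \<noteq> \<gamma> \<longrightarrow>
     \<not> adjacent (a + \<beta>) (a + \<gamma>) \<and> (\<forall>c\<in>{..<28}. c \<noteq> a \<longrightarrow> \<not> (adjacent (a + \<beta>) c \<and> adjacent c (a + \<gamma>)))"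
  unfolding lessThan_6 lessThan_28 by (simp add: jumps_def adjacent_def del: One_nat_def)

lemma upper_neighbours:
  assumes "a < b" "a < d" "b \<noteq> d" "adjacent a b" "adjacent a d"
  shows "\<not> adjacent b d \<and> (\<forall>c. a < c \<longrightarrow> \<not> (adjacent b c \<and> adjacent c d))"
proof -
  define q where "q = a div 6"
  have "6 * q \<le> a"
    unfolding q_def by simp
  then have shift: "x = 6 * q + (x - 6 * q)" if "a \<le> x" for x
    using that by linarith
  define a0 b0 d0 where "a0 = a - 6 * q" and "b0 = b - 6 * q" and "d0 = d - 6 * q"
  have "a0 < 6"
    unfolding a0_def q_def by (simp add: minus_div_mult_eq_mod[symmetric] mult.commute)
  have "adjacent a0 b0" "adjacent a0 d0" "a0 < b0" "a0 < d0" "b0 \<noteq> d0"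
    using assms shift[of a] shift[of b] shift[of d] adjacent_shift[of q]
    unfolding a0_def b0_def d0_def by (metis less_imp_le order_refl nat_add_left_cancel_less)+
  then have "b0 - a0 \<in> jumps a0" "d0 - a0 \<in> jumps a0" "b0 - a0 \<noteq> d0 - a0"
    by (auto simp: adjacent_upward)
  then have "\<not> adjacent (a0 + (b0 - a0)) (a0 + (d0 - a0)) \<and>
      (\<forall>c\<in>{..<28}. c \<noteq> a0 \<longrightarrow> \<not> (adjacent (a0 + (b0 - a0)) c \<and> adjacent c (a0 + (d0 - a0))))"
    using upper_neighbours_block_0 \<open>a0 < 6\<close> by blast
  then have local: "\<not> adjacent b0 d0 \<and> (\<forall>c\<in>{..<28}. c \<noteq> a0 \<longrightarrow> \<not> (adjacent b0 c \<and> adjacent c d0))"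
    using \<open>a0 < b0\<close> \<open>a0 < d0\<close> by simp
  have "\<not> (adjacent b c \<and> adjacent c d)" if "a < c" for c
  proof
    assume c: "adjacent b c \<and> adjacent c d"
    define c0 where "c0 = c - 6 * q"
    have "c = 6 * q + c0" "c0 \<noteq> a0"
      using shift[of c] that \<open>6 * q \<le> a\<close> unfolding c0_def a0_def by auto
    moreover have "c0 < 28"
      using adjacent_le[of b c] adjacent_le[of a b] c assms(4) shift[of b] \<open>a0 < 6\<close> \<open>c = 6 * q + c0\<close>
      unfolding a0_def b0_def by linarith
    ultimately show False
      using local c shift[of b] shift[of d] assms(1,2) adjacent_shift[of q]
      unfolding b0_def d0_def by (metis lessThan_iff less_imp_le)
  qed
  then show ?thesis
    using local shift[of b] shift[of d] assms(1,2) adjacent_shift[of q]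
    unfolding b0_def d0_def by (metis less_imp_le)
qed

lemma no_triangle:
  assumes "distinct [a, b, c]" "adjacent a b" "adjacent b c" "adjacent c a"
  shows False
proof -
  have tri: False
    if "x < y" "x < z" "y \<noteq> z" "adjacent x y" "adjacent y z" "adjacent z x" for x y z
    using upper_neighbours[of x y z] that adjacent_sym by blast
  consider "a < b \<and> a < c" | "b < a \<and> b < c" | "c < a \<and> c < b"
    using assms(1) by fastforce
  then show False
    by cases (use tri[of a b c] tri[of b c a] tri[of c a b] assms in auto)
qed

lemma no_square:
  assumes "distinct [a, b, c, d]" "adjacent a b" "adjacent b c" "adjacent c d" "adjacent d a"
  shows False
proof -
  have sq: False
    if "x < y" "x < z" "x < w" "y \<noteq> w" "adjacent x y" "adjacent y z" "adjacent z w" "adjacent w x"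
    for x y z w
    using upper_neighbours[of x y w] that adjacent_sym by blast
  consider "a < b \<and> a < c \<and> a < d" | "b < a \<and> b < c \<and> b < d" | "c < a \<and> c < b \<and> c < d"
    | "d < a \<and> d < b \<and> d < c"
    using assms(1) by fastforce
  then show False
    by cases (use sq[of a b c d] sq[of b c d a] sq[of c d a b] sq[of d a b c] assms in auto)
qed

lemma cycle_length_ge_5:
  assumes "has_cycle_of_length {..<n} (spiral_edges n) k"
  shows "5 \<le> k"
proof (rule ccontr)
  obtain xs where xs: "length xs = k" "distinct xs"
    "\<forall>i<k. {xs ! i, xs ! ((i + 1) mod k)} \<in> spiral_edges n" and "3 \<le> k"
    using assms unfolding has_cycle_of_length_def by blast
  have adj: "adjacent (xs ! i) (xs ! ((i + 1) mod k))" if "i < k" for i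
    using xs(3) that spiral_edge_adjacent by blast
  assume "\<not> 5 \<le> k"
  with \<open>3 \<le> k\<close> consider "k = 3" | "k = 4"
    by linarith
  then show False
  proof cases
    case 1
    then obtain a b c where "xs = [a, b, c]"
      using xs(1) by (auto simp: numeral_eq_Suc length_Suc_conv)
    then show False
      using no_triangle[of a b c] xs(2) adj[of 0] adj[of 1] adj[of 2] 1 by simp
  next
    case 2
    then obtain a b c d where "xs = [a, b, c, d]"
      using xs(1) by (auto simp: numeral_eq_Suc length_Suc_conv)
    then show False
      using no_square[of a b c d] xs(2) adj[of 0] adj[of 1] adj[of 2] adj[of 3] 2 by simp
  qed
qed

lemma has_5_cycle:
  assumes "13 \<le> n"
  shows "has_cycle_of_length {..<n} (spiral_edges n) 5"
proof -
  let ?xs = "[0, 1, 12, 11, 10] :: nat list"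
  have edges: "{0, 0 + 1} \<in> spiral_edges n" "{1, 1 + 11} \<in> spiral_edges n" "{11, 11 + 1} \<in> spiral_edges n"
    "{10, 10 + 1} \<in> spiral_edges n" "{0, 0 + 10} \<in> spiral_edges n"
    using assms by (intro ends_in_spiral_edges; simp add: jumps_def)+
  then have "{?xs ! i, ?xs ! ((i + 1) mod 5)} \<in> spiral_edges n" if "i < 5" for i
  proof -
    have "i = 0 \<or> i = 1 \<or> i = 2 \<or> i = 3 \<or> i = 4"
      using that by auto
    then show ?thesis
      using edges by (elim disjE) (simp_all add: insert_commute)
  qed
  then show ?thesis
    unfolding has_cycle_of_length_def using assms by (intro conjI exI[of _ ?xs]) auto
qed

lemma girth_spiral:
  assumes "13 \<le> n"
  shows "girth {..<n} (spiral_edges n) = 5"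
proof -
  let ?K = "{k. has_cycle_of_length {..<n} (spiral_edges n) k}"
  have "(INF k\<in>?K. enat k) \<le> enat 5"
    using has_5_cycle[OF assms] by (intro INF_lower) simp
  moreover have "enat 5 \<le> (INF k\<in>?K. enat k)"
    using cycle_length_ge_5 by (intro INF_greatest) simp
  ultimately show ?thesis
    unfolding girth_def by (simp add: numeral_eq_enat)
qed

section \<open>Counting edges\<close>

lemma card_edges_block_0: "card (SIGMA t:{..<6}. jumps t) = 13"
  unfolding lessThan_6 Sigma_def by (simp add: jumps_def del: One_nat_def)

lemma spiral_edges_subset_Pow: "spiral_edges n \<subseteq> Pow {..<n}"
  unfolding spiral_edges_def ends_def by auto

lemma card_spiral_edges: "13 * ((n - 11) div 6) \<le> card (spiral_edges n)"
proof -
  define Q where "Q = (n - 11) div 6"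
  let ?B = "SIGMA t:{..<6}. jumps t"
  let ?h = "\<lambda>(q, e). ends (shift q e)"
  have "ends (shift q e) \<in> spiral_edges n" if "q < Q" "e \<in> ?B" for q e
  proof -
    have e: "fst e < 6" "snd e \<in> jumps (fst e)"
      using that(2) by (simp_all add: mem_Sigma_jumps)
    have "6 * q + 6 \<le> n - 11"
      using that(1) unfolding Q_def by linarith
    then have "6 * q + fst e + snd e < n"
      using e jumps_subset by fastforce
    then show ?thesis
      using ends_in_spiral_edges[of "snd e" "6 * q + fst e" n] e(2) by (simp add: shift_def ends_def)
  qed
  then have "?h ` ({..<Q} \<times> ?B) \<subseteq> spiral_edges n"
    by auto
  moreover have "inj_on ?h ({..<Q} \<times> ?B)"
  proof (rule inj_onI)
    fix z z'
    assume "z \<in> {..<Q} \<times> ?B" "z' \<in> {..<Q} \<times> ?B" "?h z = ?h z'"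
    then obtain q t d q' t' d' where z: "z = (q, (t, d))" "z' = (q', (t', d'))"
      "t < 6" "t' < 6" "0 < d" "0 < d'" "ends (shift q (t, d)) = ends (shift q' (t', d'))"
      using jumps_pos by auto
    then have "6 * q + t = 6 * q' + t'" "d = d'"
      using ends_eq_iff[of "shift q (t, d)" "shift q' (t', d')"] by (simp_all add: shift_def)
    moreover from this(1) have "q = q'" "t = t'"
      using z(3,4) by presburger+
    ultimately show "z = z'"
      using z(1,2) by simp
  qed
  ultimately have "card ({..<Q} \<times> ?B) \<le> card (spiral_edges n)"
    using card_inj_on_le finite_subset[OF spiral_edges_subset_Pow] by blast
  then show ?thesis
    unfolding Q_def by (simp add: card_cartesian_product card_edges_block_0)
qed

lemma card_spiral_edges_lower_bound: "(2 + 1/6) * real n - 35 \<le> real (card (spiral_edges n))"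
proof -
  have "n - 11 \<le> 6 * ((n - 11) div 6) + 5"
    by linarith
  then have "real n \<le> 6 * real ((n - 11) div 6) + 16"
    by linarith
  moreover have "13 * real ((n - 11) div 6) \<le> real (card (spiral_edges n))"
    using card_spiral_edges by (metis of_nat_le_iff of_nat_mult of_nat_numeral)
  ultimately have "13 / 6 * real n - 35 \<le> real (card (spiral_edges n))"
    by linarith
  then show ?thesis
    by simp
qed

theorem theorem9:
  shows "\<exists>C::real. \<exists>N::nat. \<forall>n\<ge>N. \<exists>(V :: nat set) (E :: nat set set).
           simple_graph V E \<and> card V = n \<and> k_planar 1 V E \<and> girth V E = 5 \<and>
           real (card E) \<ge> (2 + 1/6) * real n - C"
proof (intro exI allI impI)
  fix n :: nat
  assume "13 \<le> n"
  then show "simple_graph {..<n} (spiral_edges n) \<and> card {..<n} = n \<and> k_planar 1 {..<n} (spiral_edges n) \<and>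
      girth {..<n} (spiral_edges n) = 5 \<and> real (card (spiral_edges n)) \<ge> (2 + 1/6) * real n - 35"
    using simple_graph_spiral k_planar_spiral girth_spiral card_spiral_edges_lower_bound by simp
qed

end
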